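(* Let $\varepsilon\ge0$, $\lambda=e^{\varepsilon}-1$, and let $G=(g_1,\dots,g_t)$, $G'=(g'_1,\dots,g'_t)$ be probability vectors (nonnegative entries summing to $1$). For $S\subseteq[t]$ put $$\overline H(S)=\frac{\sum_{i\in[t]\setminus S}g_i+e^{\varepsilon}\sum_{j\in S}g_j}{\sum_{i\in[t]\setminus S}g'_i+e^{\varepsilon}\sum_{j\in S}g'_j}.$$ Run the following greedy procedure: let $q_i=g_i/g'_i$ (with $q_i=+\infty$ if $g'_i=0<g_i$, and $q_i$ arbitrary if $g_i=g'_i=0$); order the indices as $\pi(1),\dots,\pi(t)$ with $q_{\pi(1)}\ge q_{\pi(2)}\ge\dots\ge q_{\pi(t)}$; set $A=B=0$; for $r=1,\dots,t$ in turn, if $q_{\pi(r)}\ge\frac{1+A\lambda}{1+B\lambda}$ then replace $A$ by $A+g_{\pi(r)}$ and $B$ by $B+g'_{\pi(r)}$; finally output $\overline H^{\mathrm{alg}}=\frac{1+A\lambda}{1+B\lambda}$. Then $\overline H^{\mathrm{alg}}=\max_{S\subseteq[t]}\overline H(S)$.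
   Context: $[t]=\{1,\dots,t\}$. In the application, $G=(p(a_1\mid x),\dots,p(a_t\mid x))$ and $G'=(p(a_1\mid x'),\dots,p(a_t\mid x'))$ are conditional distributions of an attribute $\hat X$ with alphabet $\{a_1,\dots,a_t\}$ given two values $x,x'$ of another attribute $X_k$. *)

theory Defs
  imports "HOL-Analysis.Analysis"
begin

definition Hbar :: "real \<Rightarrow> nat \<Rightarrow> (nat \<Rightarrow> real) \<Rightarrow> (nat \<Rightarrow> real) \<Rightarrow> nat set \<Rightarrow> real" where
  "Hbar \<epsilon> t g g' S =
     ((\<Sum>i\<in>{1..t} - S. g i) + exp \<epsilon> * (\<Sum>j\<in>S. g j)) /
     ((\<Sum>i\<in>{1..t} - S. g' i) + exp \<epsilon> * (\<Sum>j\<in>S. g' j))"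

fun greedy_state :: "real \<Rightarrow> (nat \<Rightarrow> real) \<Rightarrow> (nat \<Rightarrow> real) \<Rightarrow> (nat \<Rightarrow> ereal)
                      \<Rightarrow> (nat \<Rightarrow> nat) \<Rightarrow> nat \<Rightarrow> real \<times> real" where
  "greedy_state lam g g' q \<pi> 0 = (0, 0)"
| "greedy_state lam g g' q \<pi> (Suc r) =
     (let (A, B) = greedy_state lam g g' q \<pi> r; i = \<pi> (Suc r) in
      if q i \<ge> ereal ((1 + A * lam) / (1 + B * lam)) then (A + g i, B + g' i) else (A, B))"

definition Halg :: "real \<Rightarrow> nat \<Rightarrow> (nat \<Rightarrow> real) \<Rightarrow> (nat \<Rightarrow> real) \<Rightarrow> (nat \<Rightarrow> ereal)
                     \<Rightarrow> (nat \<Rightarrow> nat) \<Rightarrow> real" where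
  "Halg \<epsilon> t g g' q \<pi> =
     (let lam = exp \<epsilon> - 1; (A, B) = greedy_state lam g g' q \<pi> t in
      (1 + A * lam) / (1 + B * lam))"

end

theory Submission
  imports Defs
begin

text \<open>
  Since both vectors sum to 1, \<open>Hbar(S) = (1 + \<lambda> g(S)) / (1 + \<lambda> g'(S))\<close>.
  Accepting an index i replaces the current ratio \<open>N/D\<close> by the mediant
  \<open>(N + \<lambda> g i) / (D + \<lambda> g' i)\<close>, which lies between \<open>N/D\<close> and \<open>q i\<close>; as the \<open>q\<close>
  are scanned in decreasing order, the final ratio R is at most \<open>q i\<close> for every
  accepted i and, being the largest ratio seen, exceeds \<open>q i\<close> for every rejected i.
  So \<open>g i - R g' i\<close> is \<open>\<ge> 0\<close> on the accepted set and \<open>\<le> 0\<close> off it, and that set maximises the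
  linear set function \<open>T \<mapsto> 1 + \<lambda> g(T) - R (1 + \<lambda> g'(T))\<close>, whose value there is 0,
  and hence \<open>Hbar(T) \<le> R\<close> for all T.
\<close>

lemma sum_le_sum_nonneg_part:
  fixes c :: "'a \<Rightarrow> real"
  assumes "finite I" "S \<subseteq> I" "T \<subseteq> I"
    and "\<And>i. i \<in> S \<Longrightarrow> c i \<ge> 0" "\<And>i. i \<in> I - S \<Longrightarrow> c i \<le> 0"
  shows "sum c T \<le> sum c S"
proof -
  have "finite S" "finite T" using assms(1-3) finite_subset by blast+
  then have "sum c T = sum c (T \<inter> S) + sum c (T - S)" by (metis sum.Int_Diff)
  also have "sum c (T - S) \<le> 0" using assms(3,5) by (intro sum_nonpos) auto
  also have "sum c (T \<inter> S) \<le> sum c S" using \<open>finite S\<close> assms(4) by (intro sum_mono2) auto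
  finally show ?thesis by simp
qed

lemma ratio_le_of_threshold_set:
  fixes a b :: "'a \<Rightarrow> real"
  assumes "finite I" "S \<subseteq> I" "T \<subseteq> I" "lam \<ge> 0"
    and denom_pos: "1 + lam * sum b T > 0"
    and R: "1 + lam * sum a S = R * (1 + lam * sum b S)"
    and above: "\<And>i. i \<in> S \<Longrightarrow> R * b i \<le> a i"
    and below: "\<And>i. i \<in> I - S \<Longrightarrow> a i \<le> R * b i"
  shows "(1 + lam * sum a T) / (1 + lam * sum b T) \<le> R"
proof -
  define c where "c i = a i - R * b i" for i
  have sum_c: "sum c X = sum a X - R * sum b X" for X
    by (simp add: c_def sum_subtractf sum_distrib_left)
  have "sum c T \<le> sum c S"
    using assms(1-3) above below by (intro sum_le_sum_nonneg_part) (auto simp: c_def)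
  then have "lam * sum c T \<le> lam * sum c S" using \<open>lam \<ge> 0\<close> by (rule mult_left_mono)
  then have "1 + lam * sum a T \<le> R * (1 + lam * sum b T)"
    using R unfolding sum_c by (simp add: algebra_simps)
  then show ?thesis using denom_pos by (simp add: divide_simps)
qed

lemma mediant_ge_left:
  fixes N D a b lam :: real
  assumes "D > 0" "lam \<ge> 0" "b \<ge> 0" "N * b \<le> a * D"
  shows "N / D \<le> (N + lam * a) / (D + lam * b)"
proof -
  have "lam * (N * b) \<le> lam * (a * D)" using assms(4,2) by (rule mult_left_mono)
  then have "N * (D + lam * b) \<le> (N + lam * a) * D" by (simp add: algebra_simps)
  moreover have "D + lam * b > 0" using assms(1-3) by (simp add: add_pos_nonneg)
  ultimately show ?thesis using \<open>D > 0\<close> by (simp add: divide_simps)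
qed

lemma mediant_le_right:
  fixes N D a b lam :: real
  assumes "D > 0" "lam \<ge> 0" "b > 0" "N * b \<le> a * D"
  shows "(N + lam * a) / (D + lam * b) \<le> a / b"
proof -
  have "(N + lam * a) * b \<le> a * (D + lam * b)" using assms(4) by (simp add: algebra_simps)
  moreover have "D + lam * b > 0" using assms(1-3) by (simp add: add_pos_nonneg)
  ultimately show ?thesis using \<open>b > 0\<close> by (simp add: divide_simps)
qed

lemma Hbar_eq_ratio:
  assumes "S \<subseteq> {1..t}" "(\<Sum>i\<in>{1..t}. g i) = 1" "(\<Sum>i\<in>{1..t}. g' i) = 1"
  shows "Hbar \<epsilon> t g g' S =
    (1 + (exp \<epsilon> - 1) * sum g S) / (1 + (exp \<epsilon> - 1) * sum g' S)"
proof -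
  have "(\<Sum>i\<in>{1..t} - S. g i) = 1 - sum g S" "(\<Sum>i\<in>{1..t} - S. g' i) = 1 - sum g' S"
    using assms by (simp_all add: sum_diff finite_subset)
  then show ?thesis unfolding Hbar_def by (simp only:) (simp add: algebra_simps)
qed

locale greedy_run =
  fixes lam :: real and t :: nat and g g' :: "nat \<Rightarrow> real"
    and q :: "nat \<Rightarrow> ereal" and \<pi> :: "nat \<Rightarrow> nat"
  assumes lam_nonneg: "lam \<ge> 0"
    and g_nonneg: "\<And>i. i \<in> {1..t} \<Longrightarrow> g i \<ge> 0"
    and g'_nonneg: "\<And>i. i \<in> {1..t} \<Longrightarrow> g' i \<ge> 0"
    and q_pos: "\<And>i. i \<in> {1..t} \<Longrightarrow> g' i > 0 \<Longrightarrow> q i = ereal (g i / g' i)"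
    and q_inf: "\<And>i. i \<in> {1..t} \<Longrightarrow> g' i = 0 \<Longrightarrow> g i > 0 \<Longrightarrow> q i = \<infinity>"
    and perm: "bij_betw \<pi> {1..t} {1..t}"
    and sorted: "\<And>r s. r \<in> {1..t} \<Longrightarrow> s \<in> {1..t} \<Longrightarrow> r \<le> s \<Longrightarrow> q (\<pi> s) \<le> q (\<pi> r)"
begin

abbreviation state :: "nat \<Rightarrow> real \<times> real" where
  "state r \<equiv> greedy_state lam g g' q \<pi> r"

definition ratio :: "nat \<Rightarrow> real" where
  "ratio r = (1 + fst (state r) * lam) / (1 + snd (state r) * lam)"

definition accepted :: "nat \<Rightarrow> bool" where
  "accepted j \<longleftrightarrow> ereal (ratio (j - 1)) \<le> q (\<pi> j)"

definition accepted_set :: "nat \<Rightarrow> nat set" where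
  "accepted_set r = \<pi> ` {j \<in> {1..r}. accepted j}"

lemma state_Suc:
  "state (Suc r) =
    (if accepted (Suc r) then (fst (state r) + g (\<pi> (Suc r)), snd (state r) + g' (\<pi> (Suc r)))
     else state r)"
  by (simp add: accepted_def ratio_def Let_def split: prod.splits)

declare greedy_state.simps(2) [simp del]

lemma perm_closed: "j \<in> {1..t} \<Longrightarrow> \<pi> j \<in> {1..t}"
  using perm by (auto simp: bij_betw_def)

lemma accepted_set_subset: "r \<le> t \<Longrightarrow> accepted_set r \<subseteq> {1..t}"
  using perm_closed by (force simp: accepted_set_def)

lemma state_eq_sums:
  assumes "r \<le> t"
  shows "state r = (sum g (accepted_set r), sum g' (accepted_set r))"
proof -
  have inj: "inj_on \<pi> {j \<in> {1..r}. accepted j}"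
    using perm assms by (auto simp: bij_betw_def intro: inj_on_subset)
  have "state r = (\<Sum>j | j \<in> {1..r} \<and> accepted j. g (\<pi> j),
                   \<Sum>j | j \<in> {1..r} \<and> accepted j. g' (\<pi> j))"
  proof (induction r)
    case (Suc r)
    have "{j. j \<in> {1..Suc r} \<and> accepted j} =
        (if accepted (Suc r) then insert (Suc r) {j. j \<in> {1..r} \<and> accepted j}
         else {j. j \<in> {1..r} \<and> accepted j})"
      by (auto simp: le_Suc_eq)
    with Suc.IH show ?case by (subst state_Suc) simp
  qed simp
  then show ?thesis
    using sum.reindex[OF inj, of g] sum.reindex[OF inj, of g'] by (simp add: accepted_set_def)
qed

lemma denom_pos: "r \<le> t \<Longrightarrow> 1 + snd (state r) * lam > 0"
  using state_eq_sums[of r] accepted_set_subset[of r] g'_nonneg lam_nonneg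
  by (simp add: add_pos_nonneg sum_nonneg subset_iff)

lemma threshold_of_q_ge: "i \<in> {1..t} \<Longrightarrow> ereal x \<le> q i \<Longrightarrow> x * g' i \<le> g i"
  using q_pos[of i] g_nonneg[of i] g'_nonneg[of i]
  by (cases "g' i > 0") (auto simp: field_simps)

lemma threshold_of_q_less: "i \<in> {1..t} \<Longrightarrow> q i < ereal x \<Longrightarrow> g i \<le> x * g' i"
  using q_pos[of i] q_inf[of i] g'_nonneg[of i]
  by (cases "g' i > 0"; cases "g i > 0") (auto simp: field_simps)

lemma ratio_Suc_accepted:
  assumes "accepted (Suc r)"
  shows "ratio (Suc r) =
    ((1 + fst (state r) * lam) + lam * g (\<pi> (Suc r))) / ((1 + snd (state r) * lam) + lam * g' (\<pi> (Suc r)))"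
  using assms by (simp add: ratio_def state_Suc algebra_simps)

lemma accepted_Suc_cross:
  assumes "r < t" "accepted (Suc r)"
  shows "(1 + fst (state r) * lam) * g' (\<pi> (Suc r)) \<le> g (\<pi> (Suc r)) * (1 + snd (state r) * lam)"
proof -
  have "ratio r * g' (\<pi> (Suc r)) \<le> g (\<pi> (Suc r))"
    using assms by (intro threshold_of_q_ge perm_closed) (auto simp: accepted_def)
  then show ?thesis using denom_pos[of r] assms(1) by (simp add: ratio_def field_simps)
qed

lemma ratio_le_Suc:
  assumes "r < t"
  shows "ratio r \<le> ratio (Suc r)"
proof (cases "accepted (Suc r)")
  case True
  have "\<pi> (Suc r) \<in> {1..t}" using assms by (intro perm_closed) auto
  from mediant_ge_left[OF denom_pos lam_nonneg g'_nonneg[OF this] accepted_Suc_cross[OF assms True]]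
  show ?thesis using assms unfolding ratio_Suc_accepted[OF True] by (simp add: ratio_def)
next
  case False
  then show ?thesis by (simp add: ratio_def state_Suc)
qed

lemma ratio_mono: "j \<le> r \<Longrightarrow> r \<le> t \<Longrightarrow> ratio j \<le> ratio r"
proof (induction r rule: dec_induct)
  case (step n)
  then show ?case using ratio_le_Suc[of n] by linarith
qed simp

lemma ratio_Suc_le_q:
  assumes "r < t" "accepted (Suc r)"
  shows "ereal (ratio (Suc r)) \<le> q (\<pi> (Suc r))"
proof -
  let ?i = "\<pi> (Suc r)"
  have i: "?i \<in> {1..t}" using assms(1) by (intro perm_closed) auto
  consider "g' ?i > 0" | "g' ?i = 0" "g ?i > 0" | "g' ?i = 0" "g ?i = 0"
    using g_nonneg[OF i] g'_nonneg[OF i] by fastforce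
  then show ?thesis
  proof cases
    case 1
    then show ?thesis
      using mediant_le_right[OF denom_pos lam_nonneg 1 accepted_Suc_cross] assms q_pos[OF i]
      by (simp add: ratio_Suc_accepted)
  next
    case 2
    then show ?thesis using q_inf[OF i] by simp
  next
    case 3
    then show ?thesis using assms(2) by (simp add: ratio_def state_Suc accepted_def)
  qed
qed

lemma ratio_le_q_accepted:
  assumes "j \<in> {1..r}" "r \<le> t" "accepted j"
  shows "ereal (ratio r) \<le> q (\<pi> j)"
  using assms
proof (induction r)
  case (Suc r)
  show ?case
  proof (cases "accepted (Suc r)")
    case True
    have "ereal (ratio (Suc r)) \<le> q (\<pi> (Suc r))" using Suc.prems True by (intro ratio_Suc_le_q) auto
    also have "\<dots> \<le> q (\<pi> j)" using Suc.prems by (intro sorted) auto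
    finally show ?thesis .
  next
    case False
    then have "j \<in> {1..r}" using Suc.prems by (auto simp: le_Suc_eq)
    with False Suc show ?thesis by (simp add: ratio_def state_Suc)
  qed
qed simp

lemma q_less_ratio_rejected:
  assumes "j \<in> {1..r}" "r \<le> t" "\<not> accepted j"
  shows "q (\<pi> j) < ereal (ratio r)"
proof -
  have "q (\<pi> j) < ereal (ratio (j - 1))" using assms(3) by (simp add: accepted_def)
  also have "\<dots> \<le> ereal (ratio r)" using assms(1,2) by (auto intro: ratio_mono)
  finally show ?thesis .
qed

lemma accepted_set_threshold:
  shows "\<And>i. i \<in> accepted_set t \<Longrightarrow> ratio t * g' i \<le> g i"
    and "\<And>i. i \<in> {1..t} - accepted_set t \<Longrightarrow> g i \<le> ratio t * g' i"
proof -
  fix i assume "i \<in> accepted_set t"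
  then obtain j where "j \<in> {1..t}" "accepted j" "i = \<pi> j" by (auto simp: accepted_set_def)
  then show "ratio t * g' i \<le> g i"
    using ratio_le_q_accepted[of j t] perm_closed[of j] threshold_of_q_ge[of i "ratio t"] by auto
next
  fix i assume i: "i \<in> {1..t} - accepted_set t"
  then have "i \<in> \<pi> ` {1..t}" using perm by (simp add: bij_betw_def)
  then obtain j where "j \<in> {1..t}" "i = \<pi> j" by blast
  moreover from this i have "\<not> accepted j" by (auto simp: accepted_set_def)
  ultimately show "g i \<le> ratio t * g' i"
    using q_less_ratio_rejected[of j t] perm_closed[of j] threshold_of_q_less[of i "ratio t"] by auto
qed

end

theorem theorem2:
  fixes \<epsilon> :: real and t :: nat and g g' :: "nat \<Rightarrow> real"
    and q :: "nat \<Rightarrow> ereal" and \<pi> :: "nat \<Rightarrow> nat"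
  assumes eps: "\<epsilon> \<ge> 0"
    and g_nonneg: "\<forall>i\<in>{1..t}. g i \<ge> 0"
    and g_sum: "(\<Sum>i\<in>{1..t}. g i) = 1"
    and g'_nonneg: "\<forall>i\<in>{1..t}. g' i \<ge> 0"
    and g'_sum: "(\<Sum>i\<in>{1..t}. g' i) = 1"
    and q_pos: "\<forall>i\<in>{1..t}. g' i > 0 \<longrightarrow> q i = ereal (g i / g' i)"
    and q_inf: "\<forall>i\<in>{1..t}. g' i = 0 \<and> g i > 0 \<longrightarrow> q i = \<infinity>"
    and perm: "bij_betw \<pi> {1..t} {1..t}"
    and sorted: "\<forall>r\<in>{1..t}. \<forall>s\<in>{1..t}. r \<le> s \<longrightarrow> q (\<pi> s) \<le> q (\<pi> r)"
  shows "Halg \<epsilon> t g g' q \<pi> = Max (Hbar \<epsilon> t g g' ` Pow {1..t})"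
proof -
  define lam where "lam = exp \<epsilon> - 1"
  interpret greedy_run lam t g g' q \<pi>
    using assms by unfold_locales (auto simp: lam_def)
  let ?S = "accepted_set t"
  have S: "?S \<subseteq> {1..t}" by (rule accepted_set_subset) simp
  have Hbar_S: "Hbar \<epsilon> t g g' ?S = ratio t"
    using Hbar_eq_ratio[where \<epsilon> = \<epsilon>, OF S g_sum g'_sum, folded lam_def] state_eq_sums[of t]
    by (simp add: ratio_def mult.commute)
  have "Hbar \<epsilon> t g g' T \<le> ratio t" if T: "T \<subseteq> {1..t}" for T
    unfolding Hbar_eq_ratio[OF T g_sum g'_sum] lam_def[symmetric]
  proof (rule ratio_le_of_threshold_set[OF _ S T lam_nonneg])
    show "1 + lam * sum g' T > 0" using T g'_nonneg lam_nonneg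
      by (simp add: add_pos_nonneg sum_nonneg subset_iff)
    show "1 + lam * sum g ?S = ratio t * (1 + lam * sum g' ?S)"
      using denom_pos[of t] state_eq_sums[of t] by (simp add: ratio_def field_simps)
  qed (use accepted_set_threshold in auto)
  moreover have "Halg \<epsilon> t g g' q \<pi> = ratio t"
    unfolding Halg_def lam_def[symmetric] by (simp add: ratio_def split: prod.splits)
  moreover have "ratio t \<in> Hbar \<epsilon> t g g' ` Pow {1..t}"
    using Hbar_S S by (metis PowI image_eqI)
  ultimately show ?thesis by (intro Max_eqI[symmetric]) auto
qed

end
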